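(* Let $n\ge3$, $\boldsymbol\ell=(\ell_1,\ldots,\ell_n)$ positive lengths, $\mu\in\mathbb{R}$, and $\tau$, $N>0$ smooth functions on $T^n$ of $s^1$ only; let $\tau^*=\int_{S^1}N\tau\,ds/\int_{S^1}N\,ds$. Suppose either (a) $\mu,\tau^*$ are nonzero with the same sign and $r=(\mu/\tau^* )^{1/n}$, or (b) $\mu=\tau^*=0$ and $r>0$ is arbitrary; and let $(\bar g,\bar K)=(g_{r\boldsymbol\ell},\ \tau\,(r\ell_1)^2(ds^1)^2)$ be the corresponding solution of the constraint equations generated by the conformal data set $(g_{\boldsymbol\ell},\mu\sigma^\flat_{\boldsymbol\ell},\tau,N)$. Let $\tau^\circ=\int_{S^1}\tau\,ds$ and $\hat{\boldsymbol\ell}=(r\ell_2,\ldots,r\ell_n)$. If $\tau^\circ\ne0$, then $\bar g$ and $\bar K$ are the induced metric and second fundamental form of a simple product embedding of $T^n$ into the flat Kasner spacetime $\mathcal K_\Psi\times T^{n-1}_{\hat{\boldsymbol\ell}}$ with $\Psi=(r\ell_1)\tau^\circ$. If $\tau^\circ=0$, then $\bar g$ and $\bar K$ are the induced metric and second fundamental form of a simple product embedding into a static toroidal spacetime $\mathcal C_L\times T^{n-1}_{\hat{\boldsymbol\ell}}$ for some $L>0$.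
   Context: $q=\frac{2n}{n-2}$, $\kappa=\frac{n-1}{n}$. $S^1=\mathbb{R}/\mathbb{Z}$ with unit coordinate $s$ ($\int_{S^1}ds=1$); $T^n$ has unit coordinates $(s^1,\ldots,s^n)$; $g_{\boldsymbol\ell}=\sum_k\ell_k^2(ds^k)^2$; $T^{m}_{\hat{\boldsymbol\ell}}$ is $T^m$ with $g_{\hat{\boldsymbol\ell}}$; $\sigma^\flat_{\boldsymbol\ell}=\kappa\ell_1^2(ds^1)^2-\frac1n\sum_{k\ge2}\ell_k^2(ds^k)^2$. $\mathbb{R}^{1,1}$ is $\mathbb{R}^2$ with coordinates $(t,x)$ and metric $-dt^2+dx^2$, time-oriented by $\partial_t$; $I_\pm=\{\pm t>|x|\}$. For $\Psi\ne0$, $B_\Psi$ is the linear boost with matrix $\begin{pmatrix}\cosh\Psi&\sinh\Psi\\ \sinh\Psi&\cosh\Psi\end{pmatrix}$; the Kasner surface $\mathcal K_\Psi$ is $I_+/\langle B_\Psi\rangle$ if $\Psi>0$ and $I_-/\langle B_\Psi\rangle$ if $\Psi<0$, with the inherited time-oriented flat Lorentzian metric. For $L>0$, $\mathcal C_L=\mathbb{R}^{1,1}/\langle(t,x)\mapsto(t,x+L)\rangle$. Products carry the product Lorentzian metric; $\mathcal K_\Psi\times T^{n-1}_{\hat{\boldsymbol\ell}}$ is isometric to a flat Kasner spacetime and $\mathcal C_L\times T^{n-1}_{\hat{\boldsymbol\ell}}$ is a static toroidal spacetime. A simple product embedding $\iota:T^n\to\Lambda\times T^{n-1}_{\hat{\boldsymbol\ell}}$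 ($\Lambda$ a Lorentzian surface) has the form $\iota(s^1,\ldots,s^n)=(\gamma(s^1),(s^2,\ldots,s^n))$ for a curve $\gamma:S^1\to\Lambda$. Induced second fundamental form: $K(X,Y)=-\langle n,\nabla_XY\rangle$ with $n$ the future unit normal. *)

theory Defs
  imports "HOL-Analysis.Analysis"
begin

definition smooth_fun :: "(real \<Rightarrow> real) \<Rightarrow> bool" where
  "smooth_fun f \<longleftrightarrow> (\<forall>k x. ((deriv ^^ k) f) differentiable (at x))"

definition smooth_curve :: "(real \<Rightarrow> real \<times> real) \<Rightarrow> bool" where
  "smooth_curve \<Gamma> \<longleftrightarrow> smooth_fun (\<lambda>s. fst (\<Gamma> s)) \<and> smooth_fun (\<lambda>s. snd (\<Gamma> s))"

text \<open>Functions on S^1 = R/Z, viewed as 1-periodic functions on R.\<close>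
definition periodic1 :: "(real \<Rightarrow> real) \<Rightarrow> bool" where
  "periodic1 f \<longleftrightarrow> (\<forall>s. f (s + 1) = f s)"

definition mink :: "real \<times> real \<Rightarrow> real \<times> real \<Rightarrow> real" where
  "mink a b = - fst a * fst b + snd a * snd b"

definition boost :: "real \<Rightarrow> real \<times> real \<Rightarrow> real \<times> real" where
  "boost \<Psi> p = (cosh \<Psi> * fst p + sinh \<Psi> * snd p, sinh \<Psi> * fst p + cosh \<Psi> * snd p)"

definition I_plus :: "(real \<times> real) set" where
  "I_plus = {p. fst p > \<bar>snd p\<bar>}"

definition I_minus :: "(real \<times> real) set" where
  "I_minus = {p. - fst p > \<bar>snd p\<bar>}"

text \<open>A smooth map gamma : S^1 -> K_Psi is represented by a smooth lift
  Gamma : R -> I_+ (Psi > 0) or I_- (Psi < 0) whose projection to the quotient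
  I_(+/-) / <B_Psi> is 1-periodic (every smooth map from S^1 lifts, R being simply
  connected).  The group <B_Psi> consists of the boosts B_Psi^j = boost (j Psi).
  gamma is an embedding iff it is an immersion and injective on S^1.\<close>
definition kasner_embedded_curve :: "real \<Rightarrow> (real \<Rightarrow> real \<times> real) \<Rightarrow> bool" where
  "kasner_embedded_curve \<Psi> \<Gamma> \<longleftrightarrow>
     smooth_curve \<Gamma> \<and>
     (\<forall>s. \<Gamma> s \<in> (if \<Psi> > 0 then I_plus else I_minus)) \<and>
     (\<forall>s. \<exists>j::int. \<Gamma> (s + 1) = boost (of_int j * \<Psi>) (\<Gamma> s)) \<and>
     (\<forall>s. vector_derivative \<Gamma> (at s) \<noteq> 0) \<and>
     (\<forall>s s'. 0 \<le> s \<and> s < 1 \<and> 0 \<le> s' \<and> s' < 1 \<and> s \<noteq> s' \<longrightarrow>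
        \<not> (\<exists>j::int. \<Gamma> s = boost (of_int j * \<Psi>) (\<Gamma> s')))"

text \<open>Same for C_L = R^{1,1} / <(t,x) -> (t, x + L)>.\<close>
definition static_embedded_curve :: "real \<Rightarrow> (real \<Rightarrow> real \<times> real) \<Rightarrow> bool" where
  "static_embedded_curve L \<Gamma> \<longleftrightarrow>
     smooth_curve \<Gamma> \<and>
     (\<forall>s. \<exists>j::int. \<Gamma> (s + 1) = \<Gamma> s + (0, of_int j * L)) \<and>
     (\<forall>s. vector_derivative \<Gamma> (at s) \<noteq> 0) \<and>
     (\<forall>s s'. 0 \<le> s \<and> s < 1 \<and> 0 \<le> s' \<and> s' < 1 \<and> s \<noteq> s' \<longrightarrow>
        \<not> (\<exists>j::int. \<Gamma> s = \<Gamma> s' + (0, of_int j * L)))"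

text \<open>Tangent vectors to the (locally) product spacetime, in the coordinates (t,x) on the
  universal cover of Lambda and the unit coordinates (s^2,...,s^n) on T^{n-1}: a pair
  (a, u) with a in R^{1,1} and u k the ds^k-component (k = 2..n).
  The product metric is  -dt^2 + dx^2 + sum_{k=2..n} lhat_k^2 (ds^k)^2 ;
  its coefficients are constant, so the Levi-Civita connection is the flat one.\<close>
definition prod_metric :: "nat \<Rightarrow> (nat \<Rightarrow> real) \<Rightarrow>
    (real \<times> real) \<times> (nat \<Rightarrow> real) \<Rightarrow> (real \<times> real) \<times> (nat \<Rightarrow> real) \<Rightarrow> real" where
  "prod_metric n lhat v w =
     mink (fst v) (fst w) + (\<Sum>k\<in>{2..n}. (lhat k)\<^sup>2 * snd v k * snd w k)"

text \<open>The simple product embedding iota(s^1,...,s^n) = (gamma(s^1), (s^2,...,s^n)):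
  its differential applied to the coordinate field d/ds^i at a point s of T^n
  (s given by a lift, s i = s^i).\<close>
definition spe_tangent :: "(real \<Rightarrow> real \<times> real) \<Rightarrow> (nat \<Rightarrow> real) \<Rightarrow> nat \<Rightarrow>
    (real \<times> real) \<times> (nat \<Rightarrow> real)" where
  "spe_tangent \<Gamma> s i =
     (if i = 1 then (vector_derivative \<Gamma> (at (s 1)), (\<lambda>_. 0))
      else ((0, 0), (\<lambda>k. if k = i then 1 else 0)))"

text \<open>The covariant derivative nabla_{d/ds^i} (d iota (d/ds^j)) in the flat product spacetime.\<close>
definition spe_hessian :: "(real \<Rightarrow> real \<times> real) \<Rightarrow> (nat \<Rightarrow> real) \<Rightarrow> nat \<Rightarrow> nat \<Rightarrow>
    (real \<times> real) \<times> (nat \<Rightarrow> real)" where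
  "spe_hessian \<Gamma> s i j =
     (if i = 1 \<and> j = 1
      then (vector_derivative (\<lambda>t. vector_derivative \<Gamma> (at t)) (at (s 1)), (\<lambda>_. 0))
      else ((0, 0), (\<lambda>_. 0)))"

definition spe_induced_metric :: "nat \<Rightarrow> (nat \<Rightarrow> real) \<Rightarrow> (real \<Rightarrow> real \<times> real) \<Rightarrow>
    (nat \<Rightarrow> real) \<Rightarrow> nat \<Rightarrow> nat \<Rightarrow> real" where
  "spe_induced_metric n lhat \<Gamma> s i j =
     prod_metric n lhat (spe_tangent \<Gamma> s i) (spe_tangent \<Gamma> s j)"

text \<open>Future unit normal (time orientation by d/dt: a future timelike vector has t-component > 0).\<close>
definition spe_future_unit_normal :: "nat \<Rightarrow> (nat \<Rightarrow> real) \<Rightarrow> (real \<Rightarrow> real \<times> real) \<Rightarrow>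
    (nat \<Rightarrow> real) \<Rightarrow> (real \<times> real) \<times> (nat \<Rightarrow> real) \<Rightarrow> bool" where
  "spe_future_unit_normal n lhat \<Gamma> s \<nu> \<longleftrightarrow>
     prod_metric n lhat \<nu> \<nu> = -1 \<and>
     (\<forall>i\<in>{1..n}. prod_metric n lhat \<nu> (spe_tangent \<Gamma> s i) = 0) \<and>
     fst (fst \<nu>) > 0"

text \<open>(g, K) (given in coordinates on T^n, as functions of a lift s and indices 1..n) is the
  induced metric and second fundamental form K(X,Y) = -<n, nabla_X Y> of the simple
  product embedding determined by Gamma.\<close>
definition spe_induces :: "nat \<Rightarrow> (nat \<Rightarrow> real) \<Rightarrow> (real \<Rightarrow> real \<times> real) \<Rightarrow>
    ((nat \<Rightarrow> real) \<Rightarrow> nat \<Rightarrow> nat \<Rightarrow> real) \<Rightarrow> ((nat \<Rightarrow> real) \<Rightarrow> nat \<Rightarrow> nat \<Rightarrow> real) \<Rightarrow> bool" where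
  "spe_induces n lhat \<Gamma> g K \<longleftrightarrow>
     (\<forall>s. (\<forall>i\<in>{1..n}. \<forall>j\<in>{1..n}. spe_induced_metric n lhat \<Gamma> s i j = g s i j) \<and>
          (\<exists>\<nu>. spe_future_unit_normal n lhat \<Gamma> s \<nu> \<and>
               (\<forall>i\<in>{1..n}. \<forall>j\<in>{1..n}. - prod_metric n lhat \<nu> (spe_hessian \<Gamma> s i j) = K s i j)))"

definition flat_torus_metric :: "(nat \<Rightarrow> real) \<Rightarrow> (nat \<Rightarrow> real) \<Rightarrow> nat \<Rightarrow> nat \<Rightarrow> real" where
  "flat_torus_metric l s i j = (if i = j then (l i)\<^sup>2 else 0)"

definition ds1_sq_tensor :: "(real \<Rightarrow> real) \<Rightarrow> real \<Rightarrow> (nat \<Rightarrow> real) \<Rightarrow> nat \<Rightarrow> nat \<Rightarrow> real" where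
  "ds1_sq_tensor \<tau> c s i j = (if i = 1 \<and> j = 1 then \<tau> (s 1) * c else 0)"

end

theory Submission
  imports Defs
begin

text \<open>Put \<open>a = r \<ell>\<^sub>1\<close> and choose \<open>\<phi>\<close> with \<open>\<phi>' = a \<tau>\<close>. In null coordinates \<open>u = t + x\<close>, \<open>v = t - x\<close>
  of the Minkowski plane, a curve with \<open>u' = a c e\<^sup>\<phi>\<close> and \<open>v' = -(a/c) e\<^sup>-\<^sup>\<phi>\<close> is spacelike of speed
  \<open>a\<close>, and its second fundamental form is \<open>\<tau> a\<^sup>2 (ds\<^sup>1)\<^sup>2\<close>; the flat torus factor contributes
  nothing. Over one period \<open>\<phi>\<close> increases by \<open>\<Psi> = a \<tau>\<degree>\<close>, so \<open>u'\<close> and \<open>v'\<close> get multiplied by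
  \<open>e\<^sup>\<Psi>\<close> and \<open>e\<^sup>-\<^sup>\<Psi>\<close>. If \<open>\<Psi> \<noteq> 0\<close>, suitable constants of integration make \<open>u\<close> and \<open>v\<close> themselves
  scale in this way, which is exactly the action of the boost \<open>B\<^sub>\<Psi>\<close>: the curve closes up in the
  Kasner surface. If \<open>\<Psi> = 0\<close>, \<open>u\<close> and \<open>v\<close> are translated by \<open>a c \<integral>e\<^sup>\<phi>\<close> and \<open>-(a/c) \<integral>e\<^sup>-\<^sup>\<phi>\<close>,
  and \<open>c\<close> can be chosen so that this is a translation in \<open>x\<close> alone. In both cases \<open>u\<close> is strictly
  monotone, which makes the closed curve embedded.\<close>

section \<open>Smooth functions and antiderivatives\<close>

text \<open>Closure of \<open>smooth_fun\<close> under products would need the Leibniz rule for all higher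
  derivatives at once. Instead, every member of this class has a derivative in the class, so its
  members are smooth by induction on the order of differentiation.\<close>
inductive smooth_class :: "(real \<Rightarrow> real) \<Rightarrow> bool" where
  smooth_class_smooth_fun: "smooth_fun f \<Longrightarrow> smooth_class f"
| smooth_class_const: "smooth_class (\<lambda>x. c)"
| smooth_class_add: "smooth_class f \<Longrightarrow> smooth_class g \<Longrightarrow> smooth_class (\<lambda>x. f x + g x)"
| smooth_class_mult: "smooth_class f \<Longrightarrow> smooth_class g \<Longrightarrow> smooth_class (\<lambda>x. f x * g x)"
| smooth_class_exp: "smooth_class f \<Longrightarrow> smooth_class (\<lambda>x. exp (f x))"
| smooth_class_antiderivative:
    "smooth_class g \<Longrightarrow> (\<And>x. (f has_real_derivative g x) (at x)) \<Longrightarrow> smooth_class f"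

lemma smooth_class_has_derivative:
  assumes "smooth_class f"
  shows "\<exists>g. smooth_class g \<and> (\<forall>x. (f has_real_derivative g x) (at x))"
  using assms
proof (induction rule: smooth_class.induct)
  case (smooth_class_smooth_fun f)
  then have "f differentiable (at x)" "smooth_fun (deriv f)" for x
    unfolding smooth_fun_def by (metis funpow_0, metis comp_apply funpow_Suc_right)
  then show ?case
    by (meson DERIV_deriv_iff_real_differentiable smooth_class.smooth_class_smooth_fun)
next
  case (smooth_class_const c)
  show ?case using smooth_class.smooth_class_const[of 0] by auto
next
  case (smooth_class_add f g)
  then obtain f' g' where "smooth_class f'" "smooth_class g'"
    "\<forall>x. (f has_real_derivative f' x) (at x)" "\<forall>x. (g has_real_derivative g' x) (at x)"
    by blast
  then show ?case
    by (intro exI[of _ "\<lambda>x. f' x + g' x"]) (auto intro: smooth_class.smooth_class_add DERIV_add)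
next
  case (smooth_class_mult f g)
  then obtain f' g' where "smooth_class f'" "smooth_class g'"
    "\<forall>x. (f has_real_derivative f' x) (at x)" "\<forall>x. (g has_real_derivative g' x) (at x)"
    by blast
  with smooth_class_mult.hyps show ?case
    by (intro exI[of _ "\<lambda>x. f' x * g x + g' x * f x"])
       (auto intro: smooth_class.smooth_class_add smooth_class.smooth_class_mult DERIV_mult)
next
  case (smooth_class_exp f)
  then obtain f' where "smooth_class f'" "\<forall>x. (f has_real_derivative f' x) (at x)"
    by blast
  with smooth_class_exp.hyps show ?case
    by (intro exI[of _ "\<lambda>x. exp (f x) * f' x"])
       (auto intro: smooth_class.smooth_class_exp smooth_class.smooth_class_mult DERIV_fun_exp)
next
  case (smooth_class_antiderivative g f)
  then show ?case by blast
qed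

lemma smooth_class_imp_smooth_fun:
  assumes "smooth_class f"
  shows "smooth_fun f"
proof -
  have "smooth_class ((deriv ^^ k) f)" for k
  proof (induction k)
    case 0
    show ?case using assms by simp
  next
    case (Suc k)
    then obtain g where g: "smooth_class g" "\<forall>x. ((deriv ^^ k) f has_real_derivative g x) (at x)"
      using smooth_class_has_derivative by blast
    then have "deriv ((deriv ^^ k) f) = g" using DERIV_imp_deriv by blast
    with g show ?case by simp
  qed
  then show ?thesis
    unfolding smooth_fun_def using smooth_class_has_derivative real_differentiable_def by blast
qed

lemma smooth_class_isCont: "smooth_class f \<Longrightarrow> isCont f x"
  using smooth_class_has_derivative DERIV_isCont by blast

lemma smooth_class_cmult: "smooth_class f \<Longrightarrow> smooth_class (\<lambda>x. c * f x)"
  by (intro smooth_class_mult smooth_class_const)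

lemma smooth_class_minus: "smooth_class f \<Longrightarrow> smooth_class (\<lambda>x. - f x)"
  using smooth_class_cmult[of f "-1"] by simp

lemma smooth_class_diff: "smooth_class f \<Longrightarrow> smooth_class g \<Longrightarrow> smooth_class (\<lambda>x. f x - g x)"
  using smooth_class_add[OF _ smooth_class_minus] by simp

lemma smooth_class_divide_const: "smooth_class f \<Longrightarrow> smooth_class (\<lambda>x. f x / c)"
  using smooth_class_cmult[of f "1 / c"] by simp

lemma continuous_imp_has_antiderivative:
  fixes f :: "real \<Rightarrow> real"
  assumes "\<And>x. isCont f x"
  obtains F where "\<And>x. (F has_real_derivative f x) (at x)"
proof -
  have "\<exists>F. \<forall>x::real. (-\<infinity>::ereal) < x \<longrightarrow> x < (\<infinity>::ereal) \<longrightarrow> (F has_vector_derivative f x) (at x)"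
    by (rule einterval_antiderivative) (auto intro: assms)
  then show ?thesis
    using that by (auto simp: has_real_derivative_iff_has_vector_derivative)
qed

lemma smooth_class_has_antiderivative:
  assumes "smooth_class f"
  obtains F where "smooth_class F" "\<And>x. (F has_real_derivative f x) (at x)"
  using continuous_imp_has_antiderivative smooth_class_isCont[OF assms]
    smooth_class_antiderivative[OF assms] by metis

lemma integral_01_eq_antiderivative_diff:
  assumes "\<And>x. (F has_real_derivative f x) (at x)"
  shows "integral {0..1} f = F 1 - F 0"
proof -
  have "(f has_integral F 1 - F 0) {0..1}"
    by (rule fundamental_theorem_of_calculus)
       (auto simp: has_real_derivative_iff_has_vector_derivative[symmetric]
             intro: has_field_derivative_at_within assms)
  then show ?thesis by (rule integral_unique)
qed

lemma pos_deriv_imp_strict_mono: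
  fixes f :: "real \<Rightarrow> real"
  assumes "\<And>x. (f has_real_derivative f' x) (at x)" "\<And>x. f' x > 0"
  shows "strict_mono f"
  using DERIV_pos_imp_increasing assms by (metis strict_monoI)

lemma quasi_periodic_derivative_defect_const:
  fixes w h :: "real \<Rightarrow> real"
  assumes deriv: "\<And>x. (w has_real_derivative h x) (at x)" and per: "\<And>x. h (x + 1) = q * h x"
  shows "w (s + 1) - q * w s = w 1 - q * w 0"
proof -
  have "((\<lambda>s. w (s + 1) - q * w s) has_real_derivative h (x + 1) - q * h x) (at x)" for x
    using DERIV_shift deriv by (intro DERIV_diff DERIV_cmult) blast+
  then have "\<forall>x. ((\<lambda>s. w (s + 1) - q * w s) has_real_derivative 0) (at x)"
    by (simp add: per)
  from DERIV_isconst_all[OF this, of s 0] show ?thesis by simp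
qed

lemma antiderivative_of_periodic:
  fixes w h :: "real \<Rightarrow> real"
  assumes "\<And>x. (w has_real_derivative h x) (at x)" and "\<And>x. h (x + 1) = h x"
  shows "w (s + 1) = w s + (w 1 - w 0)"
  using quasi_periodic_derivative_defect_const[of w h 1 s] assms by simp

lemma antiderivative_of_quasi_periodic:
  fixes w h :: "real \<Rightarrow> real"
  assumes "\<And>x. (w has_real_derivative h x) (at x)" and "\<And>x. h (x + 1) = q * h x"
    and "q \<noteq> 1"
  obtains C where "\<And>s. w (s + 1) + C = q * (w s + C)"
proof
  fix s
  define D where "D = w 1 - q * w 0"
  have "w (s + 1) = q * w s + D"
    using quasi_periodic_derivative_defect_const[OF assms(1,2), of s] unfolding D_def by simp
  then show "w (s + 1) + D / (q - 1) = q * (w s + D / (q - 1))"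
    using assms(3) by (simp add: field_simps)
qed

lemma scaled_primitive_of_periodic:
  fixes \<tau> :: "real \<Rightarrow> real"
  assumes "smooth_fun \<tau>" and \<tau>_per: "\<And>s. \<tau> (s + 1) = \<tau> s"
  obtains \<phi> where "smooth_class \<phi>" "\<And>x. (\<phi> has_real_derivative a * \<tau> x) (at x)"
    "\<And>s. \<phi> (s + 1) = \<phi> s + a * integral {0..1} \<tau>"
proof -
  obtain F where "smooth_class F" and dF: "\<And>x. (F has_real_derivative \<tau> x) (at x)"
    using smooth_class_has_antiderivative[OF smooth_class_smooth_fun[OF \<open>smooth_fun \<tau>\<close>]] by blast
  have "F (s + 1) = F s + integral {0..1} \<tau>" for s
    using antiderivative_of_periodic[OF dF \<tau>_per] by (simp add: integral_01_eq_antiderivative_diff[OF dF])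
  moreover have "((\<lambda>x. a * F x) has_real_derivative a * \<tau> x) (at x)" for x
    by (rule DERIV_cmult[OF dF])
  ultimately show ?thesis
    using that[of "\<lambda>x. a * F x"] smooth_class_cmult[OF \<open>smooth_class F\<close>] by (simp add: distrib_left)
qed

section \<open>Strictly increasing functions with (quasi-)periodic increments\<close>

lemma strict_mono_translation_period_inj:
  fixes w :: "real \<Rightarrow> real" and j :: int
  assumes mono: "strict_mono w" and per: "\<And>s. w (s + 1) = w s + L"
    and "s \<in> {0..<1}" "s' \<in> {0..<1}" and eq: "w s = w s' + of_int j * L"
  shows "s = s'"
proof -
  have L: "L > 0" using per[of 0] strict_monoD[OF mono, of 0 1] by simp
  have no_fraction: False if "x < y" "y < x + 1" "w y = w x + of_int k * L" for x y k
  proof -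
    have "0 < of_int k * L" "of_int k * L < 1 * L"
      using strict_monoD[OF mono, of x y] strict_monoD[OF mono, of y "x + 1"] per[of x] that
      by simp_all
    then have "0 < k" "k < 1"
      using L by (simp_all add: zero_less_mult_iff mult_less_cancel_right)
    then show False by simp
  qed
  consider "s' < s" | "s = s'" | "s < s'" by linarith
  then show ?thesis
  proof cases
    case 1
    then show ?thesis using no_fraction[of s' s j] eq assms(3,4) by simp
  next
    case 3
    then show ?thesis using no_fraction[of s s' "- j"] eq assms(3,4) by simp
  qed
qed

lemma scaling_period_iterate:
  fixes w :: "real \<Rightarrow> real"
  assumes per: "\<And>s. w (s + 1) = exp \<Psi> * w s"
  shows "w (s + real k) = exp (real k * \<Psi>) * w s"
proof (induction k)
  case (Suc k)
  have "w (s + real (Suc k)) = w ((s + real k) + 1)" by (simp add: algebra_simps)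
  also have "\<dots> = exp \<Psi> * w (s + real k)" by (rule per)
  finally show ?case using Suc by (simp add: distrib_right exp_add)
qed simp

lemma strict_mono_scaling_period_pos:
  fixes w :: "real \<Rightarrow> real"
  assumes mono: "strict_mono w" and per: "\<And>s. w (s + 1) = exp \<Psi> * w s" and "\<Psi> > 0"
  shows "w s > 0"
proof -
  have "(exp \<Psi> - 1) * w 0 > 0"
    using strict_monoD[OF mono, of 0 1] per[of 0] by (simp add: algebra_simps)
  then have w0: "w 0 > 0"
    using \<open>\<Psi> > 0\<close> by (simp add: zero_less_mult_iff)
  obtain k :: nat where "- s \<le> real k" using real_arch_simple by blast
  then have "w 0 \<le> w (s + real k)"
    using strict_mono_mono[OF mono] by (simp add: monoD)
  then have "exp (real k * \<Psi>) * w s > 0"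
    using w0 scaling_period_iterate[where w = w, OF per, of s k] by simp
  then show ?thesis by (simp add: zero_less_mult_iff)
qed

text \<open>The case \<open>\<Psi> < 0\<close> reduces to \<open>\<Psi> > 0\<close> under the reflection \<open>w \<mapsto> -w(-\<cdot>)\<close>.\<close>
lemma strict_mono_scaling_period_neg:
  fixes w :: "real \<Rightarrow> real"
  assumes mono: "strict_mono w" and per: "\<And>s. w (s + 1) = exp \<Psi> * w s" and "\<Psi> < 0"
  shows "w s < 0"
proof -
  have "strict_mono (\<lambda>x. - w (- x))"
    using mono by (auto simp: strict_mono_def)
  moreover have "- w (- (x + 1)) = exp (- \<Psi>) * - w (- x)" for x
    using per[of "- (x + 1)"] by (simp add: exp_minus field_simps)
  ultimately have "- w (- (- s)) > 0"
    by (rule strict_mono_scaling_period_pos) (use \<open>\<Psi> < 0\<close> in simp)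
  then show ?thesis by simp
qed

text \<open>On the positive (negative) branch, \<open>ln w\<close> (\<open>- ln (- w)\<close>) turns the scaling into a translation.\<close>
lemma strict_mono_scaling_period_inj:
  fixes w :: "real \<Rightarrow> real" and j :: int
  assumes mono: "strict_mono w" and per: "\<And>s. w (s + 1) = exp \<Psi> * w s" and "\<Psi> \<noteq> 0"
    and "s \<in> {0..<1}" "s' \<in> {0..<1}" and eq: "w s = exp (of_int j * \<Psi>) * w s'"
  shows "s = s'"
proof (cases "\<Psi> > 0")
  case True
  then have pos: "w x > 0" for x
    using strict_mono_scaling_period_pos[OF mono per] by blast
  show ?thesis
  proof (rule strict_mono_translation_period_inj[of "\<lambda>x. ln (w x)" \<Psi> s s' j])
    show "strict_mono (\<lambda>x. ln (w x))"
      using mono pos by (simp add: strict_mono_def)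
    show "ln (w (x + 1)) = ln (w x) + \<Psi>" for x
      using pos[of x] by (simp add: per ln_mult_pos)
    show "ln (w s) = ln (w s') + of_int j * \<Psi>"
      using pos[of s'] by (simp add: eq ln_mult_pos)
  qed (use assms in auto)
next
  case False
  with \<open>\<Psi> \<noteq> 0\<close> have neg: "w x < 0" for x
    using strict_mono_scaling_period_neg[OF mono per] by simp
  show ?thesis
  proof (rule strict_mono_translation_period_inj[of "\<lambda>x. - ln (- w x)" "- \<Psi>" s s' j])
    show "strict_mono (\<lambda>x. - ln (- w x))"
      using mono neg by (simp add: strict_mono_def)
    show "- ln (- w (x + 1)) = - ln (- w x) + - \<Psi>" for x
      using neg[of x] ln_mult_pos[of "exp \<Psi>" "- w x"] by (simp add: per)
    show "- ln (- w s) = - ln (- w s') + of_int j * - \<Psi>"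
      using neg[of s'] ln_mult_pos[of "exp (of_int j * \<Psi>)" "- w s'"] by (simp add: eq)
  qed (use assms in auto)
qed

section \<open>Null coordinates in the Minkowski plane\<close>

definition null_point :: "real \<Rightarrow> real \<Rightarrow> real \<times> real" where
  "null_point u v = ((u + v) / 2, (u - v) / 2)"

lemma null_point_eq_iff: "null_point u v = null_point u' v' \<longleftrightarrow> u = u' \<and> v = v'"
  by (auto simp: null_point_def field_simps)

lemma null_point_eq_0_iff: "null_point u v = 0 \<longleftrightarrow> u = 0 \<and> v = 0"
  by (auto simp: null_point_def zero_prod_def field_simps)

lemma mink_null_point: "mink (null_point u v) (null_point u' v') = - (u * v' + v * u') / 2"
  by (simp add: mink_def null_point_def field_simps)

lemma null_point_in_I_plus_iff: "null_point u v \<in> I_plus \<longleftrightarrow> u > 0 \<and> v > 0"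
  by (auto simp: I_plus_def null_point_def abs_less_iff field_simps)

lemma null_point_in_I_minus_iff: "null_point u v \<in> I_minus \<longleftrightarrow> u < 0 \<and> v < 0"
  by (auto simp: I_minus_def null_point_def abs_less_iff field_simps)

lemma boost_null_point: "boost \<Psi> (null_point u v) = null_point (exp \<Psi> * u) (exp (- \<Psi>) * v)"
  by (simp add: boost_def null_point_def cosh_def sinh_def field_simps)

lemma null_point_translate_x: "null_point u v + (0, L) = null_point (u + L) (v - L)"
  by (simp add: null_point_def field_simps)

lemma has_vector_derivative_null_point:
  assumes "(u has_real_derivative u') (at s)" "(v has_real_derivative v') (at s)"
  shows "((\<lambda>s. null_point (u s) (v s)) has_vector_derivative null_point u' v') (at s)"
  unfolding null_point_def
  using assms by (intro has_vector_derivative_Pair)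
    (auto simp: has_real_derivative_iff_has_vector_derivative[symmetric] intro!: derivative_eq_intros)

lemma vector_derivative_null_point:
  assumes "\<And>x. (u has_real_derivative u' x) (at x)" "\<And>x. (v has_real_derivative v' x) (at x)"
  shows "vector_derivative (\<lambda>s. null_point (u s) (v s)) (at s) = null_point (u' s) (v' s)"
  using has_vector_derivative_null_point[OF assms] by (rule vector_derivative_at)

lemma smooth_curve_null_point:
  assumes "smooth_class u" "smooth_class v"
  shows "smooth_curve (\<lambda>s. null_point (u s) (v s))"
  unfolding smooth_curve_def null_point_def fst_conv snd_conv
  using assms by (auto intro!: smooth_class_imp_smooth_fun smooth_class_divide_const
      smooth_class_add smooth_class_diff)

section \<open>Simple product embeddings along null curves\<close>

lemma spe_induced_metric_of_speed:
  assumes speed: "mink (vector_derivative \<Gamma> (at (s 1))) (vector_derivative \<Gamma> (at (s 1))) = (lhat 1)\<^sup>2"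
    and "i \<in> {1..n}" "j \<in> {1..n}"
  shows "spe_induced_metric n lhat \<Gamma> s i j = flat_torus_metric lhat s i j"
proof -
  have torus_part: "(\<Sum>k\<in>{2..n}. (lhat k)\<^sup>2 * (if k = i then 1 else 0) * (if k = j then 1 else 0))
      = (if i = j then (lhat i)\<^sup>2 else 0)" if "i \<in> {2..n}"
  proof -
    have "(\<Sum>k\<in>{2..n}. (lhat k)\<^sup>2 * (if k = i then 1 else 0) * (if k = j then 1 else 0))
        = (\<Sum>k\<in>{2..n}. if k = i then (if i = j then (lhat i)\<^sup>2 else 0) else 0)"
      by (rule sum.cong) auto
    with that show ?thesis by simp
  qed
  consider "i = 1" "j = 1" | "i = 1" "j \<noteq> 1" | "i \<noteq> 1" "j = 1" | "i \<in> {2..n}" "j \<in> {2..n}"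
    using assms(2,3) by fastforce
  then show ?thesis
  proof cases
    case 1
    then show ?thesis
      using speed by (simp add: spe_induced_metric_def prod_metric_def spe_tangent_def flat_torus_metric_def)
  next
    case 4
    then show ?thesis
      using torus_part by (simp add: spe_induced_metric_def prod_metric_def spe_tangent_def flat_torus_metric_def mink_def)
  qed (simp_all add: spe_induced_metric_def prod_metric_def spe_tangent_def flat_torus_metric_def mink_def)
qed

lemma spe_induces_of_planar_normal:
  fixes \<Gamma> \<nu> :: "real \<Rightarrow> real \<times> real"
  assumes speed: "\<And>t. mink (vector_derivative \<Gamma> (at t)) (vector_derivative \<Gamma> (at t)) = (lhat 1)\<^sup>2"
    and unit: "\<And>t. mink (\<nu> t) (\<nu> t) = -1"
    and normal: "\<And>t. mink (\<nu> t) (vector_derivative \<Gamma> (at t)) = 0"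
    and future: "\<And>t. fst (\<nu> t) > 0"
    and curvature:
      "\<And>t. - mink (\<nu> t) (vector_derivative (\<lambda>t. vector_derivative \<Gamma> (at t)) (at t)) = \<tau> t * c"
  shows "spe_induces n lhat \<Gamma> (flat_torus_metric lhat) (ds1_sq_tensor \<tau> c)"
  unfolding spe_induces_def
proof (intro allI conjI ballI)
  fix s :: "nat \<Rightarrow> real" and i j
  assume "i \<in> {1..n}" "j \<in> {1..n}"
  with speed show "spe_induced_metric n lhat \<Gamma> s i j = flat_torus_metric lhat s i j"
    by (rule spe_induced_metric_of_speed)
next
  fix s :: "nat \<Rightarrow> real"
  let ?\<nu> = "(\<nu> (s 1), \<lambda>_::nat. 0 :: real)"
  have "spe_future_unit_normal n lhat \<Gamma> s ?\<nu>"
    using unit normal future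
    by (auto simp: spe_future_unit_normal_def prod_metric_def spe_tangent_def mink_def)
  moreover have "- prod_metric n lhat ?\<nu> (spe_hessian \<Gamma> s i j) = ds1_sq_tensor \<tau> c s i j" for i j
    using curvature[of "s 1"]
    by (auto simp: prod_metric_def spe_hessian_def ds1_sq_tensor_def mink_def)
  ultimately show "\<exists>\<nu>. spe_future_unit_normal n lhat \<Gamma> s \<nu> \<and>
      (\<forall>i\<in>{1..n}. \<forall>j\<in>{1..n}. - prod_metric n lhat \<nu> (spe_hessian \<Gamma> s i j) = ds1_sq_tensor \<tau> c s i j)"
    by blast
qed

lemma spe_induces_null_curve:
  fixes u v A B \<tau> :: "real \<Rightarrow> real"
  assumes a: "a > 0" "lhat 1 = a"
    and du: "\<And>x. (u has_real_derivative A x) (at x)"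
    and dv: "\<And>x. (v has_real_derivative - B x) (at x)"
    and dA: "\<And>x. (A has_real_derivative a * \<tau> x * A x) (at x)"
    and dB: "\<And>x. (B has_real_derivative - (a * \<tau> x * B x)) (at x)"
    and pos: "\<And>x. A x > 0" "\<And>x. B x > 0" and AB: "\<And>x. A x * B x = a\<^sup>2"
  shows "spe_induces n lhat (\<lambda>s. null_point (u s) (v s)) (flat_torus_metric lhat) (ds1_sq_tensor \<tau> (a\<^sup>2))"
proof -
  have vd: "vector_derivative (\<lambda>s. null_point (u s) (v s)) (at t) = null_point (A t) (- B t)" for t
    using vector_derivative_null_point[OF du dv] .
  have dminusB: "((\<lambda>x. - B x) has_real_derivative a * \<tau> x * B x) (at x)" for x
    using DERIV_minus[OF dB] by simp
  have vd2: "vector_derivative (\<lambda>t. vector_derivative (\<lambda>s. null_point (u s) (v s)) (at t)) (at t)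
      = null_point (a * \<tau> t * A t) (a * \<tau> t * B t)" for t
    unfolding vd by (rule vector_derivative_null_point[OF dA dminusB])
  show ?thesis
  proof (rule spe_induces_of_planar_normal[where \<nu> = "\<lambda>t. null_point (A t / a) (B t / a)"])
    show "mink (vector_derivative (\<lambda>s. null_point (u s) (v s)) (at t))
        (vector_derivative (\<lambda>s. null_point (u s) (v s)) (at t)) = (lhat 1)\<^sup>2" for t
      using AB[of t] a by (simp add: vd mink_null_point mult.commute)
    show "mink (null_point (A t / a) (B t / a)) (null_point (A t / a) (B t / a)) = -1" for t
      using AB[of t] a by (simp add: mink_null_point field_simps power2_eq_square)
    show "mink (null_point (A t / a) (B t / a)) (vector_derivative (\<lambda>s. null_point (u s) (v s)) (at t)) = 0" for t
      by (simp add: vd mink_null_point field_simps)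
    show "fst (null_point (A t / a) (B t / a)) > 0" for t
      using pos[of t] pos(2)[of t] a by (simp add: null_point_def add_pos_pos)
    show "- mink (null_point (A t / a) (B t / a))
        (vector_derivative (\<lambda>t. vector_derivative (\<lambda>s. null_point (u s) (v s)) (at t)) (at t))
        = \<tau> t * a\<^sup>2" for t
      using AB[of t] a by (simp add: vd2 mink_null_point field_simps power2_eq_square)
  qed
qed

lemma spe_induces_exp_potential:
  fixes u v \<phi> \<tau> :: "real \<Rightarrow> real"
  assumes a: "a > 0" "lhat 1 = a" and "c > 0"
    and d\<phi>: "\<And>x. (\<phi> has_real_derivative a * \<tau> x) (at x)"
    and du: "\<And>x. (u has_real_derivative a * c * exp (\<phi> x)) (at x)"
    and dv: "\<And>x. (v has_real_derivative - (a / c * exp (- \<phi> x))) (at x)"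
  shows "spe_induces n lhat (\<lambda>s. null_point (u s) (v s)) (flat_torus_metric lhat) (ds1_sq_tensor \<tau> (a\<^sup>2))"
proof (rule spe_induces_null_curve[where A = "\<lambda>x. a * c * exp (\<phi> x)" and B = "\<lambda>x. a / c * exp (- \<phi> x)"])
  show "((\<lambda>x. a * c * exp (\<phi> x)) has_real_derivative a * \<tau> x * (a * c * exp (\<phi> x))) (at x)" for x
    using DERIV_cmult[OF DERIV_fun_exp[OF d\<phi>], of "a * c"] by (simp add: algebra_simps)
  show "((\<lambda>x. a / c * exp (- \<phi> x)) has_real_derivative - (a * \<tau> x * (a / c * exp (- \<phi> x)))) (at x)" for x
    using DERIV_cmult[OF DERIV_fun_exp[OF DERIV_minus[OF d\<phi>]], of "a / c"] by (simp add: algebra_simps)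
  show "a * c * exp (\<phi> x) * (a / c * exp (- \<phi> x)) = a\<^sup>2" for x
    using \<open>c > 0\<close> by (simp add: exp_minus field_simps power2_eq_square)
qed (use a \<open>c > 0\<close> du dv in auto)

section \<open>Closed embedded curves in the Kasner and static surfaces\<close>

lemma kasner_embedded_null_curve:
  fixes u v A B :: "real \<Rightarrow> real"
  assumes "\<Psi> \<noteq> 0" and smooth: "smooth_class u" "smooth_class v"
    and du: "\<And>x. (u has_real_derivative A x) (at x)"
    and dv: "\<And>x. (v has_real_derivative - B x) (at x)"
    and pos: "\<And>x. A x > 0" "\<And>x. B x > 0"
    and uper: "\<And>s. u (s + 1) = exp \<Psi> * u s" and vper: "\<And>s. v (s + 1) = exp (- \<Psi>) * v s"
  shows "kasner_embedded_curve \<Psi> (\<lambda>s. null_point (u s) (v s))"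
  unfolding kasner_embedded_curve_def
proof (intro conjI allI impI)
  have umono: "strict_mono u"
    by (rule pos_deriv_imp_strict_mono[OF du pos(1)])
  have vmono: "strict_mono (\<lambda>x. - v x)"
    by (rule pos_deriv_imp_strict_mono[OF DERIV_minus[OF dv]]) (simp add: pos(2))
  have vper': "- v (s + 1) = exp (- \<Psi>) * - v s" for s
    by (simp add: vper)
  show "smooth_curve (\<lambda>s. null_point (u s) (v s))"
    using smooth by (rule smooth_curve_null_point)
  fix s
  show "null_point (u s) (v s) \<in> (if \<Psi> > 0 then I_plus else I_minus)"
  proof (cases "\<Psi> > 0")
    case True
    then have "u s > 0" "- v s < 0"
      using strict_mono_scaling_period_pos[OF umono uper]
        strict_mono_scaling_period_neg[OF vmono vper'] by simp_all
    with True show ?thesis by (simp add: null_point_in_I_plus_iff)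
  next
    case False
    with \<open>\<Psi> \<noteq> 0\<close> have "u s < 0" "- v s > 0"
      using strict_mono_scaling_period_neg[OF umono uper]
        strict_mono_scaling_period_pos[OF vmono vper'] by simp_all
    with False show ?thesis by (simp add: null_point_in_I_minus_iff)
  qed
  show "\<exists>j::int. null_point (u (s + 1)) (v (s + 1)) = boost (of_int j * \<Psi>) (null_point (u s) (v s))"
    by (rule exI[of _ 1]) (simp add: boost_null_point uper vper)
  show "vector_derivative (\<lambda>s. null_point (u s) (v s)) (at s) \<noteq> 0"
    using pos(1)[of s] by (simp add: vector_derivative_null_point[OF du dv] null_point_eq_0_iff)
next
  fix s s' :: real
  assume range: "0 \<le> s \<and> s < 1 \<and> 0 \<le> s' \<and> s' < 1 \<and> s \<noteq> s'"
  show "\<not> (\<exists>j::int. null_point (u s) (v s) = boost (of_int j * \<Psi>) (null_point (u s') (v s')))"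
  proof
    assume "\<exists>j::int. null_point (u s) (v s) = boost (of_int j * \<Psi>) (null_point (u s') (v s'))"
    then obtain j :: int
      where "null_point (u s) (v s) = boost (of_int j * \<Psi>) (null_point (u s') (v s'))" ..
    then have "u s = exp (of_int j * \<Psi>) * u s'"
      by (simp add: boost_null_point null_point_eq_iff)
    with \<open>\<Psi> \<noteq> 0\<close> range have "s = s'"
      by (intro strict_mono_scaling_period_inj[OF pos_deriv_imp_strict_mono[OF du pos(1)] uper, of s s' j]) auto
    with range show False by simp
  qed
qed

lemma static_embedded_null_curve:
  fixes u v A B :: "real \<Rightarrow> real"
  assumes smooth: "smooth_class u" "smooth_class v"
    and du: "\<And>x. (u has_real_derivative A x) (at x)"
    and dv: "\<And>x. (v has_real_derivative - B x) (at x)"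
    and pos: "\<And>x. A x > 0"
    and uper: "\<And>s. u (s + 1) = u s + L" and vper: "\<And>s. v (s + 1) = v s - L"
  shows "static_embedded_curve L (\<lambda>s. null_point (u s) (v s))"
  unfolding static_embedded_curve_def
proof (intro conjI allI impI)
  show "smooth_curve (\<lambda>s. null_point (u s) (v s))"
    using smooth by (rule smooth_curve_null_point)
  fix s
  show "\<exists>j::int. null_point (u (s + 1)) (v (s + 1)) = null_point (u s) (v s) + (0, of_int j * L)"
    by (rule exI[of _ 1]) (simp add: null_point_translate_x uper vper)
  show "vector_derivative (\<lambda>s. null_point (u s) (v s)) (at s) \<noteq> 0"
    using pos[of s] by (simp add: vector_derivative_null_point[OF du dv] null_point_eq_0_iff)
next
  fix s s' :: real
  assume range: "0 \<le> s \<and> s < 1 \<and> 0 \<le> s' \<and> s' < 1 \<and> s \<noteq> s'"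
  show "\<not> (\<exists>j::int. null_point (u s) (v s) = null_point (u s') (v s') + (0, of_int j * L))"
  proof
    assume "\<exists>j::int. null_point (u s) (v s) = null_point (u s') (v s') + (0, of_int j * L)"
    then obtain j :: int where "null_point (u s) (v s) = null_point (u s') (v s') + (0, of_int j * L)" ..
    then have "u s = u s' + of_int j * L"
      by (simp add: null_point_translate_x null_point_eq_iff)
    with range have "s = s'"
      by (intro strict_mono_translation_period_inj[OF pos_deriv_imp_strict_mono[OF du pos] uper, of s s' j]) auto
    with range show False by simp
  qed
qed

lemma kasner_curve_exists:
  fixes \<phi> \<tau> :: "real \<Rightarrow> real"
  assumes a: "a > 0" "lhat 1 = a" and "\<Psi> \<noteq> 0" and "smooth_class \<phi>"
    and d\<phi>: "\<And>x. (\<phi> has_real_derivative a * \<tau> x) (at x)"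
    and \<phi>per: "\<And>s. \<phi> (s + 1) = \<phi> s + \<Psi>"
  shows "\<exists>\<Gamma>. kasner_embedded_curve \<Psi> \<Gamma> \<and>
    spe_induces n lhat \<Gamma> (flat_torus_metric lhat) (ds1_sq_tensor \<tau> (a\<^sup>2))"
proof -
  define A where "A x = a * exp (\<phi> x)" for x
  define B where "B x = a * exp (- \<phi> x)" for x
  have smooth_A: "smooth_class A" and smooth_minus_B: "smooth_class (\<lambda>x. - B x)"
    unfolding A_def B_def using \<open>smooth_class \<phi>\<close>
    by (auto intro!: smooth_class_cmult smooth_class_minus smooth_class_exp)
  obtain P where "smooth_class P" and dP: "\<And>x. (P has_real_derivative A x) (at x)"
    using smooth_class_has_antiderivative[OF smooth_A] by blast
  obtain Q where "smooth_class Q" and dQ: "\<And>x. (Q has_real_derivative - B x) (at x)"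
    using smooth_class_has_antiderivative[OF smooth_minus_B] by blast
  have A_per: "A (x + 1) = exp \<Psi> * A x" and minus_B_per: "- B (x + 1) = exp (- \<Psi>) * - B x" for x
    by (simp_all add: A_def B_def \<phi>per exp_add[symmetric])
  obtain C where C: "\<And>s. P (s + 1) + C = exp \<Psi> * (P s + C)"
    using antiderivative_of_quasi_periodic[OF dP A_per] \<open>\<Psi> \<noteq> 0\<close> by auto
  obtain D where D: "\<And>s. Q (s + 1) + D = exp (- \<Psi>) * (Q s + D)"
    using antiderivative_of_quasi_periodic[OF dQ minus_B_per] \<open>\<Psi> \<noteq> 0\<close> by auto
  define u where "u = (\<lambda>s. P s + C)"
  define v where "v = (\<lambda>s. Q s + D)"
  have smooth_u: "smooth_class u" and smooth_v: "smooth_class v"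
    unfolding u_def v_def using \<open>smooth_class P\<close> \<open>smooth_class Q\<close>
    by (auto intro: smooth_class_add smooth_class_const)
  have du: "(u has_real_derivative A x) (at x)" for x
    unfolding u_def using DERIV_add[OF dP DERIV_const] by simp
  have dv: "(v has_real_derivative - B x) (at x)" for x
    unfolding v_def using DERIV_add[OF dQ DERIV_const] by simp
  have "kasner_embedded_curve \<Psi> (\<lambda>s. null_point (u s) (v s))"
    by (rule kasner_embedded_null_curve[OF \<open>\<Psi> \<noteq> 0\<close> smooth_u smooth_v du dv])
       (use a C D in \<open>simp_all add: u_def v_def A_def B_def\<close>)
  moreover have "spe_induces n lhat (\<lambda>s. null_point (u s) (v s))
      (flat_torus_metric lhat) (ds1_sq_tensor \<tau> (a\<^sup>2))"
    by (rule spe_induces_exp_potential[where c = 1 and \<phi> = \<phi> and \<tau> = \<tau>])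
       (use a d\<phi> du dv in \<open>simp_all add: A_def B_def\<close>)
  ultimately show ?thesis by blast
qed

lemma static_curve_exists:
  fixes \<phi> \<tau> :: "real \<Rightarrow> real"
  assumes a: "a > 0" "lhat 1 = a" and "smooth_class \<phi>"
    and d\<phi>: "\<And>x. (\<phi> has_real_derivative a * \<tau> x) (at x)"
    and \<phi>per: "\<And>s. \<phi> (s + 1) = \<phi> s"
  shows "\<exists>L > 0. \<exists>\<Gamma>. static_embedded_curve L \<Gamma> \<and>
    spe_induces n lhat \<Gamma> (flat_torus_metric lhat) (ds1_sq_tensor \<tau> (a\<^sup>2))"
proof -
  obtain P where "smooth_class P" and dP: "\<And>x. (P has_real_derivative exp (\<phi> x)) (at x)"
    using smooth_class_has_antiderivative[OF smooth_class_exp] \<open>smooth_class \<phi>\<close> by metis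
  obtain Q where "smooth_class Q" and dQ: "\<And>x. (Q has_real_derivative exp (- \<phi> x)) (at x)"
    using smooth_class_has_antiderivative[OF smooth_class_exp[OF smooth_class_minus]] \<open>smooth_class \<phi>\<close>
    by metis
  define I where "I = P 1 - P 0"
  define J where "J = Q 1 - Q 0"
  have "I > 0" "J > 0"
    using strict_monoD[OF pos_deriv_imp_strict_mono[OF dP], of 0 1]
      strict_monoD[OF pos_deriv_imp_strict_mono[OF dQ], of 0 1]
    by (simp_all add: I_def J_def)
  have P_per: "P (s + 1) = P s + I" and Q_per: "Q (s + 1) = Q s + J" for s
    unfolding I_def J_def
    by (rule antiderivative_of_periodic[OF dP], simp add: \<phi>per,
        rule antiderivative_of_periodic[OF dQ], simp add: \<phi>per)
  define c where "c = sqrt (J / I)"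
  define L where "L = a * c * I"
  have "c > 0" and c_balance: "a / c * J = L"
    using \<open>I > 0\<close> \<open>J > 0\<close> by (simp_all add: c_def L_def field_simps real_sqrt_divide)
  define u where "u = (\<lambda>s. a * c * P s)"
  define v where "v = (\<lambda>s. - (a / c) * Q s)"
  have du: "(u has_real_derivative a * c * exp (\<phi> x)) (at x)" for x
    unfolding u_def by (rule DERIV_cmult[OF dP])
  have dv: "(v has_real_derivative - (a / c * exp (- \<phi> x))) (at x)" for x
    unfolding v_def using DERIV_cmult[OF dQ, of "- (a / c)"] by simp
  have "static_embedded_curve L (\<lambda>s. null_point (u s) (v s))"
  proof (rule static_embedded_null_curve[OF _ _ du dv])
    show "smooth_class u" "smooth_class v"
      unfolding u_def v_def using \<open>smooth_class P\<close> \<open>smooth_class Q\<close>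
      by (simp_all only: smooth_class_cmult)
    show "u (s + 1) = u s + L" for s
      using P_per[of s] by (simp add: u_def L_def algebra_simps)
    show "v (s + 1) = v s - L" for s
      using Q_per[of s] c_balance by (simp add: v_def add_divide_distrib algebra_simps)
  qed (use a \<open>c > 0\<close> in simp)
  moreover have "spe_induces n lhat (\<lambda>s. null_point (u s) (v s))
      (flat_torus_metric lhat) (ds1_sq_tensor \<tau> (a\<^sup>2))"
    using a \<open>c > 0\<close> d\<phi> du dv by (rule spe_induces_exp_potential)
  moreover have "L > 0"
    using a \<open>c > 0\<close> \<open>I > 0\<close> by (simp add: L_def)
  ultimately show ?thesis by blast
qed

theorem proposition6p2:
  fixes n :: nat and l :: "nat \<Rightarrow> real" and \<mu> r :: real and \<tau> N :: "real \<Rightarrow> real"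
  assumes n3: "n \<ge> 3"
    and l_pos: "\<forall>k\<in>{1..n}. l k > 0"
    and \<tau>_smooth: "smooth_fun \<tau>" and \<tau>_per: "periodic1 \<tau>"
    and N_smooth: "smooth_fun N" and N_per: "periodic1 N" and N_pos: "\<forall>s. N s > 0"
    and r_choice:
      "let \<tau>star = integral {0..1} (\<lambda>s. N s * \<tau> s) / integral {0..1} N in
         (\<mu> \<noteq> 0 \<and> \<tau>star \<noteq> 0 \<and> sgn \<mu> = sgn \<tau>star \<and> r = (\<mu> / \<tau>star) powr (1 / real n))
         \<or> (\<mu> = 0 \<and> \<tau>star = 0 \<and> r > 0)"
  shows
    "let gbar = flat_torus_metric (\<lambda>k. r * l k);
         Kbar = ds1_sq_tensor \<tau> ((r * l 1)\<^sup>2);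
         \<tau>circ = integral {0..1} \<tau>;
         lhat = (\<lambda>k. r * l k)
     in (\<tau>circ \<noteq> 0 \<longrightarrow>
           (\<exists>\<Gamma>. kasner_embedded_curve ((r * l 1) * \<tau>circ) \<Gamma> \<and> spe_induces n lhat \<Gamma> gbar Kbar))
      \<and> (\<tau>circ = 0 \<longrightarrow>
           (\<exists>L > 0. \<exists>\<Gamma>. static_embedded_curve L \<Gamma> \<and> spe_induces n lhat \<Gamma> gbar Kbar))"
proof -
  have "r > 0"
    using r_choice by (auto simp: Let_def sgn_if divide_pos_pos divide_neg_neg split: if_splits)
  define a where "a = r * l 1"
  have a: "a > 0" "(\<lambda>k. r * l k) 1 = a"
    using \<open>r > 0\<close> l_pos n3 by (simp_all add: a_def)
  obtain \<phi> where "smooth_class \<phi>" and d\<phi>: "\<And>x. (\<phi> has_real_derivative a * \<tau> x) (at x)"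
    and \<phi>_per: "\<And>s. \<phi> (s + 1) = \<phi> s + a * integral {0..1} \<tau>"
    using scaled_primitive_of_periodic[OF \<tau>_smooth] \<tau>_per unfolding periodic1_def by blast
  show ?thesis
    unfolding Let_def a_def[symmetric]
    using kasner_curve_exists[where lhat = "\<lambda>k. r * l k", OF a _ \<open>smooth_class \<phi>\<close> d\<phi> \<phi>_per]
      static_curve_exists[where lhat = "\<lambda>k. r * l k", OF a \<open>smooth_class \<phi>\<close> d\<phi>] \<phi>_per a(1)
    by auto
qed

end
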